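(* For each integer $n\ge 1$, the function $x\mapsto k_n(x)$ is strictly increasing on each of the intervals $[0,1)$ and $(1,+\infty)$: on $[0,1)$ it increases from $k_n(0)=0$ to $+\infty$ (as $x\to 1^-$), and on $(1,+\infty)$ it increases from $-\infty$ (as $x\to1^+$) to $-1$ (as $x\to+\infty$).
   Context: For an integer $n\ge1$, $x\ge 0$, $x\neq 1$, define $H_n(x,0)=\sum_{l=1}^{n}\frac{1-x\cos(2\pi l/n)}{\left(1+x^2-2x\cos(2\pi l/n)\right)^{3/2}}$, and $k_n(x)=\frac1n H_n(x,0)-1$. *)

theory Defs
  imports "HOL-Analysis.Analysis"
begin

definition H0 :: "nat \<Rightarrow> real \<Rightarrow> real" where
  "H0 n x = (\<Sum>l=1..n. (1 - x * cos (2 * pi * real l / real n)) /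
       (1 + x^2 - 2 * x * cos (2 * pi * real l / real n)) powr (3/2))"

definition k :: "nat \<Rightarrow> real \<Rightarrow> real" where
  "k n x = H0 n x / real n - 1"

end

(* For |z| < 1 the binomial series of (1 - cnj z) powr (-1/2) and (1 - z) powr (-3/2) have
   positive coefficients, and their product is (1 - cnj z) / |1 - z|^3.  Put z = x e^(i theta).
   The real part of e^(i s theta) times this product is, for s = 0, the summand of H_n(x,0), and for
   s = 1 the kernel (cos theta - x) / |1 - z|^3; as power series in x their coefficients are positive
   combinations of cos(q theta) with integer q.  Summing over the n-th roots of unity turns each
   cos(q theta) into n or 0, so both sums are power series with nonnegative, not all constant,
   coefficients, hence strictly increasing on [0,1).  For x > 1 the inversion t = 1/x gives
   H_n(x,0) = -t^2 G(t) with G the sum for s = 1, so H_n(.,0) increases on (1,oo) as well and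
   tends to 0 at infinity.  Near x = 1 only the term l = n, which is (1 - x) / |1 - x|^3, is
   unbounded; the remaining terms are continuous there. *)

theory Submission
  imports Defs "HOL-Real_Asymp.Real_Asymp"
begin

section \<open>Binomial series\<close>

definition negbinomial_coeff :: "real \<Rightarrow> nat \<Rightarrow> real" where
  "negbinomial_coeff a j = pochhammer a j / fact j"

lemma negbinomial_coeff_pos: "0 < a \<Longrightarrow> 0 < negbinomial_coeff a j"
  by (simp add: negbinomial_coeff_def pochhammer_pos)

lemma negbinomial_series:
  fixes z :: complex
  assumes "norm z < 1"
  shows "(\<lambda>j. of_real (negbinomial_coeff a j) * z^j) sums ((1 - z) powr (- of_real a))"
proof -
  have "(\<lambda>j. ((- of_real a) gchoose j) * (-z)^j) sums ((1 + (-z)) powr (- of_real a))"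
    by (rule gen_binomial_complex) (use assms in simp)
  moreover have "((- of_real a) gchoose j) * (-z)^j = of_real (negbinomial_coeff a j) * z^j" for j
  proof -
    have "((- of_real a :: complex) gchoose j) = (-1)^j * of_real (negbinomial_coeff a j)"
      by (simp add: gbinomial_pochhammer negbinomial_coeff_def pochhammer_of_real of_real_divide)
    moreover have "(-z)^j = (-1)^j * z^j"
      by (rule power_minus)
    moreover have "(-1::complex)^j * (-1)^j = 1"
      by (simp flip: power_add)
    ultimately show ?thesis
      by (metis (no_types, lifting) mult.assoc mult.left_commute mult_1)
  qed
  ultimately show ?thesis by simp
qed

lemma summable_norm_negbinomial_series:
  fixes z :: complex
  assumes "0 < a" "norm z < 1"
  shows "summable (\<lambda>j. norm (of_real (negbinomial_coeff a j) * z^j))"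
proof -
  have "summable (\<lambda>j. of_real (negbinomial_coeff a j) * (of_real (norm z) :: complex)^j)"
    using negbinomial_series[of "of_real (norm z)"] assms by (auto dest: sums_summable)
  then have "summable (\<lambda>j. negbinomial_coeff a j * norm z ^ j)"
    by (simp flip: summable_complex_of_real)
  then show ?thesis
    using negbinomial_coeff_pos[OF assms(1)] by (simp add: norm_mult norm_power abs_of_pos)
qed

lemma cnj_powr_half_times_powr_three_halves:
  fixes w :: complex
  assumes "0 < Re w"
  shows "cnj w powr (-1/2) * w powr (-3/2) = cnj w / of_real (norm w ^ 3)"
proof -
  define P where "P = w powr (-1/2)"
  have w: "w \<noteq> 0" using assms by auto
  have conj: "cnj w powr (-1/2) = cnj P"
    using assms by (simp add: P_def cnj_powr)
  have "w powr (-3/2) = w powr (-1/2 + -1)" by simp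
  also have "\<dots> = P * inverse w"
    using w by (simp only: P_def powr_add powr_minus powr_to_1)
  finally have split: "w powr (-3/2) = P * inverse w" .
  have "norm P ^ 2 = (norm w powr (-1/2)) ^ 2"
    by (simp add: P_def norm_powr_real_powr')
  also have "\<dots> = inverse (norm w)"
    using w by (simp add: powr_minus power_inverse powr_power)
  finally have "of_real (norm P ^ 2) = (of_real (inverse (norm w)) :: complex)"
    by (rule arg_cong)
  then have norm_P: "cnj P * P = of_real (inverse (norm w))"
    by (metis complex_norm_square mult.commute)
  have inv: "inverse w = cnj w / of_real (norm w ^ 2)"
    using w by (simp only: complex_norm_square) (simp add: divide_simps)
  have "cnj w powr (-1/2) * w powr (-3/2) = (cnj P * P) * inverse w"
    by (simp only: conj split mult.assoc)
  also have "\<dots> = cnj w / of_real (norm w ^ 3)"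
    unfolding norm_P inv using w by (simp add: field_simps power3_eq_cube power2_eq_square)
  finally show ?thesis .
qed

lemma negbinomial_product_sums:
  fixes z :: complex
  assumes "norm z < 1"
  shows "(\<lambda>m. \<Sum>i\<le>m. of_real (negbinomial_coeff (1/2) i * negbinomial_coeff (3/2) (m - i))
                      * (cnj z ^ i * z ^ (m - i)))
         sums ((1 - cnj z) / of_real (norm (1 - z) ^ 3))"
proof -
  have z: "norm (cnj z) < 1" "0 < Re (1 - z)"
    using assms complex_Re_le_cmod[of z] by auto
  define a where "a i = of_real (negbinomial_coeff (1/2) i) * cnj z ^ i" for i
  define b where "b j = of_real (negbinomial_coeff (3/2) j) * z ^ j" for j
  have "(\<lambda>m. \<Sum>i\<le>m. a i * b (m - i)) sums ((\<Sum>i. a i) * (\<Sum>j. b j))"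
    unfolding a_def b_def using assms z
    by (intro Cauchy_product_sums summable_norm_negbinomial_series) auto
  also have "(\<Sum>i. a i) * (\<Sum>j. b j) = (1 - cnj z) powr (-1/2) * (1 - z) powr (-3/2)"
    using negbinomial_series[OF z(1), of "1/2"] negbinomial_series[OF assms, of "3/2"]
    by (simp add: a_def b_def sums_iff)
  also have "\<dots> = (1 - cnj z) / of_real (norm (1 - z) ^ 3)"
    using cnj_powr_half_times_powr_three_halves[OF z(2)] by simp
  finally show ?thesis
    by (simp add: a_def b_def mult_ac)
qed

section \<open>Fourier expansion of the kernel\<close>

lemma power2_powr_three_halves: "((x::real)^2) powr (3/2) = \<bar>x\<bar>^3"
proof (cases "x = 0")
  case False
  then have x: "0 < \<bar>x\<bar>" by simp
  have "x^2 = \<bar>x\<bar> powr (real 2)"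
    using x by (simp add: powr_realpow)
  then have "(x^2) powr (3/2) = \<bar>x\<bar> powr (real 2 * (3/2))"
    by (simp only: powr_powr)
  also have "real 2 * (3/2) = real 3" by simp
  also have "\<bar>x\<bar> powr real 3 = \<bar>x\<bar>^3"
    using x by (rule powr_realpow)
  finally show ?thesis .
qed simp

lemma norm_one_minus_cis_cube:
  "norm (1 - of_real t * cis \<theta>) ^ 3 = (1 + t^2 - 2*t*cos \<theta>) powr (3/2)"
proof -
  have "norm (1 - of_real t * cis \<theta>) ^ 2 = 1 + t^2 - 2*t*cos \<theta>"
    by (simp add: cmod_power2 power2_diff cos_squared_eq algebra_simps)
  then show ?thesis
    by (metis abs_norm_cancel power2_powr_three_halves)
qed

lemma Re_cis_cnj_power_power:
  "Re (cis \<alpha> * (cnj (of_real t * cis \<theta>) ^ i * (of_real t * cis \<theta>) ^ j))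
     = t^(i+j) * cos (\<alpha> + (real j - real i) * \<theta>)"
proof -
  have "cnj (of_real t * cis \<theta>) ^ i = of_real (t^i) * cis (real i * - \<theta>)"
    by (simp only: complex_cnj_mult complex_cnj_complex_of_real cis_cnj power_mult_distrib
        Complex.DeMoivre of_real_power)
  moreover have "(of_real t * cis \<theta>) ^ j = of_real (t^j) * cis (real j * \<theta>)"
    by (simp only: power_mult_distrib Complex.DeMoivre of_real_power)
  ultimately have "cis \<alpha> * (cnj (of_real t * cis \<theta>) ^ i * (of_real t * cis \<theta>) ^ j)
      = of_real (t^i * t^j) * (cis \<alpha> * (cis (real i * - \<theta>) * cis (real j * \<theta>)))"
    by (simp only: of_real_mult mult_ac)
  also have "\<dots> = of_real (t^(i+j)) * cis (\<alpha> + (real j - real i) * \<theta>)"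
    by (simp only: cis_mult power_add) (simp add: algebra_simps)
  finally show ?thesis by simp
qed

lemma cos_kernel_sums:
  fixes t \<theta> :: real and s :: int
  assumes "0 \<le> t" "t < 1"
  shows "(\<lambda>m. t^m * (\<Sum>i\<le>m. negbinomial_coeff (1/2) i * negbinomial_coeff (3/2) (m - i)
                     * cos (real_of_int (int m - 2 * int i + s) * \<theta>)))
         sums ((cos (s * \<theta>) - t * cos ((s - 1) * \<theta>)) / (1 + t^2 - 2 * t * cos \<theta>) powr (3/2))"
proof -
  define z where "z = of_real t * cis \<theta>"
  have "norm z < 1"
    using assms by (simp add: z_def norm_mult)
  have summand: "Re (cis (s * \<theta>) * (of_real (negbinomial_coeff (1/2) i * negbinomial_coeff (3/2) (m - i))
                                     * (cnj z ^ i * z ^ (m - i))))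
      = t^m * (negbinomial_coeff (1/2) i * negbinomial_coeff (3/2) (m - i)
               * cos (real_of_int (int m - 2 * int i + s) * \<theta>))" if "i \<le> m" for i m
  proof -
    have scale: "Re (cis (s * \<theta>) * (of_real C * w)) = C * Re (cis (s * \<theta>) * w)" for C w
      by (simp add: algebra_simps)
    have "Re (cis (s * \<theta>) * (cnj z ^ i * z ^ (m - i)))
        = t^m * cos (real_of_int (int m - 2 * int i + s) * \<theta>)"
      using that unfolding z_def Re_cis_cnj_power_power by (simp add: algebra_simps)
    then show ?thesis
      unfolding scale by (simp only: mult_ac)
  qed
  have num: "Re (cis (s * \<theta>) * (1 - cnj z)) = cos (s * \<theta>) - t * cos ((s - 1) * \<theta>)"
    by (simp add: z_def cis_cnj ring_distribs flip: mult.assoc cis_mult) (simp add: cos_diff algebra_simps)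
  have "(\<lambda>m. Re (cis (s * \<theta>) * (\<Sum>i\<le>m. of_real (negbinomial_coeff (1/2) i * negbinomial_coeff (3/2) (m - i))
                                               * (cnj z ^ i * z ^ (m - i)))))
        sums Re (cis (s * \<theta>) * ((1 - cnj z) / of_real (norm (1 - z) ^ 3)))"
    by (intro sums_Re sums_mult negbinomial_product_sums \<open>norm z < 1\<close>)
  also have "(\<lambda>m. Re (cis (s * \<theta>) * (\<Sum>i\<le>m. of_real (negbinomial_coeff (1/2) i * negbinomial_coeff (3/2) (m - i))
                                               * (cnj z ^ i * z ^ (m - i)))))
      = (\<lambda>m. t^m * (\<Sum>i\<le>m. negbinomial_coeff (1/2) i * negbinomial_coeff (3/2) (m - i)
                     * cos (real_of_int (int m - 2 * int i + s) * \<theta>)))"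
    unfolding sum_distrib_left Re_sum by (intro ext sum.cong refl summand) simp
  also have "Re (cis (s * \<theta>) * ((1 - cnj z) / of_real (norm (1 - z) ^ 3)))
      = (cos (s * \<theta>) - t * cos ((s - 1) * \<theta>)) / (1 + t^2 - 2 * t * cos \<theta>) powr (3/2)"
    unfolding times_divide_eq_right Re_divide_of_real num unfolding z_def norm_one_minus_cis_cube ..
  finally show ?thesis .
qed

section \<open>Averaging over the roots of unity\<close>

lemma sum_cos_roots_of_unity_nonneg:
  "0 \<le> (\<Sum>l=1..n. cos (real_of_int q * (2 * pi * real l / real n)))"
proof -
  define w where "w = cis (2 * pi * real_of_int q / real n)"
  have sum_eq: "(\<Sum>l=1..n. cos (real_of_int q * (2 * pi * real l / real n))) = Re (\<Sum>l=1..n. w^l)"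
    by (simp add: w_def Complex.DeMoivre Re_sum mult_ac)
  have sum_zero: "(\<Sum>l=1..n. w^l) = 0" if "w \<noteq> 1"
  proof -
    have "w^n = 1"
      by (cases "n = 0") (simp_all add: w_def Complex.DeMoivre cis_multiple_2pi)
    then show ?thesis
      using that by (simp add: sum_gp)
  qed
  show ?thesis
  proof (cases "w = 1")
    case True
    then show ?thesis unfolding sum_eq by simp
  next
    case False
    then show ?thesis unfolding sum_eq sum_zero[OF False] by simp
  qed
qed

definition ring_coeff :: "nat \<Rightarrow> int \<Rightarrow> nat \<Rightarrow> real" where
  "ring_coeff n s m = (\<Sum>i\<le>m. negbinomial_coeff (1/2) i * negbinomial_coeff (3/2) (m - i) *
      (\<Sum>l=1..n. cos (real_of_int (int m - 2 * int i + s) * (2 * pi * real l / real n))))"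

lemma ring_coeff_nonneg: "0 \<le> ring_coeff n s m"
  unfolding ring_coeff_def
  by (intro sum_nonneg mult_nonneg_nonneg less_imp_le[OF negbinomial_coeff_pos]
      sum_cos_roots_of_unity_nonneg) simp_all

lemma ring_coeff_pos:
  assumes "n \<ge> 1" "i \<le> m" "int m - 2 * int i + s = 0"
  shows "0 < ring_coeff n s m"
proof -
  let ?c = "\<lambda>i. negbinomial_coeff (1/2) i * negbinomial_coeff (3/2) (m - i)"
  have "0 < ?c i * real n"
    using assms(1) by (simp add: negbinomial_coeff_pos)
  also have "?c i * real n = ?c i *
      (\<Sum>l=1..n. cos (real_of_int (int m - 2 * int i + s) * (2 * pi * real l / real n)))"
    using assms(3) by simp
  also have "\<dots> \<le> ring_coeff n s m"
    unfolding ring_coeff_def using assms(2)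
    by (intro member_le_sum mult_nonneg_nonneg less_imp_le[OF negbinomial_coeff_pos]
        sum_cos_roots_of_unity_nonneg) simp_all
  finally show ?thesis .
qed

lemma ring_coeff_sums:
  assumes "0 \<le> t" "t < 1"
  shows "(\<lambda>m. ring_coeff n s m * t^m) sums
    (\<Sum>l=1..n. (cos (s * (2 * pi * real l / real n)) - t * cos ((s - 1) * (2 * pi * real l / real n)))
               / (1 + t^2 - 2 * t * cos (2 * pi * real l / real n)) powr (3/2))"
proof -
  have "(\<lambda>m. \<Sum>l=1..n. t^m * (\<Sum>i\<le>m. negbinomial_coeff (1/2) i * negbinomial_coeff (3/2) (m-i)
          * cos (real_of_int (int m - 2 * int i + s) * (2 * pi * real l / real n)))) sums
    (\<Sum>l=1..n. (cos (s * (2 * pi * real l / real n)) - t * cos ((s - 1) * (2 * pi * real l / real n)))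
               / (1 + t^2 - 2 * t * cos (2 * pi * real l / real n)) powr (3/2))"
    by (intro sums_sum cos_kernel_sums assms)
  moreover have "(\<Sum>l=1..n. t^m * (\<Sum>i\<le>m. negbinomial_coeff (1/2) i * negbinomial_coeff (3/2) (m-i)
          * cos (real_of_int (int m - 2 * int i + s) * (2 * pi * real l / real n))))
       = ring_coeff n s m * t^m" for m
    unfolding ring_coeff_def sum_distrib_left sum_distrib_right
    by (subst sum.swap) (simp add: mult_ac)
  ultimately show ?thesis by simp
qed

section \<open>Monotonicity\<close>

lemma power_series_strict_mono_on:
  fixes c :: "nat \<Rightarrow> real"
  assumes nonneg: "\<And>m. 0 \<le> c m" and pos: "0 < c M" "1 \<le> M"
    and sums: "\<And>t. 0 \<le> t \<Longrightarrow> t < 1 \<Longrightarrow> (\<lambda>m. c m * t^m) sums f t"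
  shows "strict_mono_on {0..<1} f"
proof (rule strict_mono_onI)
  fix x y :: real
  assume "x \<in> {0..<1}" "y \<in> {0..<1}" "x < y"
  then have xy: "0 \<le> x" "x < y" "y < 1" by auto
  have diff: "(\<lambda>m. c m * y^m - c m * x^m) sums (f y - f x)"
    using xy by (intro sums_diff sums) auto
  have "0 \<le> c m * y^m - c m * x^m" for m
    using nonneg[of m] xy by (simp add: mult_left_mono power_mono flip: right_diff_distrib)
  moreover have "0 < c M * y^M - c M * x^M"
    using pos xy power_strict_mono[of x y M] by (simp flip: right_diff_distrib)
  ultimately have "0 < (\<Sum>m. c m * y^m - c m * x^m)"
    by (intro suminf_pos2[OF sums_summable[OF diff]])
  then show "f x < f y"
    using sums_unique[OF diff] by simp
qed

lemma H0_sums: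
  assumes "0 \<le> x" "x < 1"
  shows "(\<lambda>m. ring_coeff n 0 m * x^m) sums H0 n x"
  using ring_coeff_sums[OF assms, of n 0] by (simp add: H0_def)

definition ring_attraction :: "nat \<Rightarrow> real \<Rightarrow> real" where
  "ring_attraction n t = (\<Sum>l=1..n. (cos (2 * pi * real l / real n) - t)
                            / (1 + t^2 - 2 * t * cos (2 * pi * real l / real n)) powr (3/2))"

lemma ring_attraction_sums:
  assumes "0 \<le> t" "t < 1"
  shows "(\<lambda>m. ring_coeff n 1 m * t^m) sums ring_attraction n t"
  using ring_coeff_sums[OF assms, of n 1] by (simp add: ring_attraction_def)

lemma H0_strict_mono_on: "n \<ge> 1 \<Longrightarrow> strict_mono_on {0..<1} (H0 n)"
  by (rule power_series_strict_mono_on[of "ring_coeff n 0" 2])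
     (auto intro: ring_coeff_nonneg ring_coeff_pos[of n 1] H0_sums)

lemma ring_attraction_strict_mono_on: "n \<ge> 1 \<Longrightarrow> strict_mono_on {0..<1} (ring_attraction n)"
  by (rule power_series_strict_mono_on[of "ring_coeff n 1" 1])
     (auto intro: ring_coeff_nonneg ring_coeff_pos[of n 1] ring_attraction_sums)

lemma ring_attraction_nonneg:
  assumes "0 \<le> t" "t < 1"
  shows "0 \<le> ring_attraction n t"
  using sums_le[OF _ sums_zero ring_attraction_sums[OF assms]] assms ring_coeff_nonneg
  by simp

lemma kernel_inversion:
  fixes x c :: real
  assumes x: "0 < x" and c: "c \<le> 1"
  shows "(1 - x * c) / (1 + x^2 - 2 * x * c) powr (3/2)
       = - ((1/x)^2 * ((c - 1/x) / (1 + (1/x)^2 - 2 * (1/x) * c) powr (3/2)))"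
proof -
  define t where "t = 1/x"
  define R where "R = 1 + t^2 - 2 * t * c"
  have "0 \<le> (1 - t)^2 + 2 * t * (1 - c)"
    using x c by (simp add: t_def)
  then have R: "0 \<le> R" by (simp add: R_def power2_eq_square algebra_simps)
  have "1 + x^2 - 2 * x * c = x^2 * R"
    using x by (simp add: R_def t_def power2_eq_square field_simps)
  then have "(1 + x^2 - 2 * x * c) powr (3/2) = x^3 * R powr (3/2)"
    using R x by (simp add: powr_mult power2_powr_three_halves)
  then show ?thesis
    using x by (cases "R = 0") (simp_all add: t_def R_def field_simps power2_eq_square power3_eq_cube)
qed

lemma H0_inversion:
  assumes "1 < x"
  shows "H0 n x = - ((1/x)^2 * ring_attraction n (1/x))"
  unfolding H0_def ring_attraction_def sum_distrib_left sum_negf[symmetric]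
  using assms by (intro sum.cong refl kernel_inversion) simp_all

lemma H0_strict_mono_on_gt1:
  assumes "n \<ge> 1"
  shows "strict_mono_on {1<..} (H0 n)"
proof (rule strict_mono_onI)
  fix x y :: real
  assume "x \<in> {1<..}" "y \<in> {1<..}" "x < y"
  then have x: "1 < x" and y: "1 < y" and st: "0 < 1/y" "1/y < 1/x" "1/x < 1"
    by (auto simp: frac_less2)
  have "(1/y)^2 * ring_attraction n (1/y) \<le> (1/x)^2 * ring_attraction n (1/y)"
    using st y ring_attraction_nonneg[of "1/y" n] by (intro mult_right_mono power_mono) auto
  also have "\<dots> < (1/x)^2 * ring_attraction n (1/x)"
    using x y st strict_mono_onD[OF ring_attraction_strict_mono_on[OF assms], of "1/y" "1/x"]
    by (simp add: mult_strict_left_mono)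
  finally show "H0 n x < H0 n y"
    using x y by (simp add: H0_inversion)
qed

lemma k_strict_mono_onI:
  assumes "n \<ge> 1" "strict_mono_on A (H0 n)"
  shows "strict_mono_on A (k n)"
  using assms by (auto simp: strict_mono_on_def k_def divide_strict_right_mono)

section \<open>Limits\<close>

lemma cos_two_pi_frac_lt_1:
  assumes "0 < l" "l < n"
  shows "cos (2 * pi * real l / real n) < 1"
proof -
  have "cos (2 * pi * real l / real n) \<noteq> 1"
  proof
    assume "cos (2 * pi * real l / real n) = 1"
    then obtain j :: int where "2 * pi * real l / real n = real_of_int j * 2 * pi"
      by (auto simp: cos_one_2pi_int)
    then have "real_of_int (int l) = real_of_int (j * int n)"
      using assms by (simp add: field_simps)
    then have "int l = j * int n"
      by (simp only: of_int_eq_iff)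
    then have "n dvd l"
      by (metis dvd_triv_right int_dvd_int_iff)
    then show False
      using assms by (auto dest: dvd_imp_le)
  qed
  then show ?thesis
    using cos_le_one by (simp add: order_less_le)
qed

lemma H0_pole_decomposition:
  assumes "n \<ge> 1"
  obtains R where "isCont R 1" "\<And>x. H0 n x = (1 - x) / \<bar>1 - x\<bar>^3 + R x"
proof -
  let ?c = "\<lambda>l. cos (2 * pi * real l / real n)"
  define R where "R x = (\<Sum>l=1..<n. (1 - x * ?c l) / (1 + x^2 - 2 * x * ?c l) powr (3/2))" for x
  have "isCont R 1"
    unfolding R_def
  proof (intro isCont_sum ballI)
    fix l
    assume "l \<in> {1..<n}"
    then have "?c l < 1"
      by (intro cos_two_pi_frac_lt_1) auto
    then show "isCont (\<lambda>x. (1 - x * ?c l) / (1 + x^2 - 2 * x * ?c l) powr (3/2)) 1"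
      by (intro continuous_intros) auto
  qed
  moreover have "H0 n x = (1 - x) / \<bar>1 - x\<bar>^3 + R x" for x
  proof -
    have "{1..n} = insert n {1..<n}"
      using assms by auto
    moreover have "(1 + x^2 - 2 * x) powr (3/2) = \<bar>1 - x\<bar>^3"
      using power2_powr_three_halves[of "1 - x"] by (simp add: power2_diff algebra_simps)
    ultimately show ?thesis
      using assms by (simp add: H0_def R_def)
  qed
  ultimately show thesis
    using that by blast
qed

lemma k_pole_decomposition:
  assumes "n \<ge> 1"
  obtains g where "isCont g 1" "\<And>x. k n x = g x + (1 - x) / \<bar>1 - x\<bar>^3 / real n"
proof -
  obtain R where "isCont R 1" and R: "\<And>x. H0 n x = (1 - x) / \<bar>1 - x\<bar>^3 + R x"
    using H0_pole_decomposition[OF assms] by blast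
  then have "isCont (\<lambda>x. R x / real n - 1) 1"
    using assms by (intro continuous_intros) auto
  moreover have "k n x = (R x / real n - 1) + (1 - x) / \<bar>1 - x\<bar>^3 / real n" for x
    by (simp add: k_def R add_divide_distrib)
  ultimately show thesis
    using that by blast
qed

lemma filterlim_k_at_left_1:
  assumes "n \<ge> 1"
  shows "filterlim (k n) at_top (at_left 1)"
proof -
  obtain g where "isCont g 1" and k: "\<And>x. k n x = g x + (1 - x) / \<bar>1 - x\<bar>^3 / real n"
    using k_pole_decomposition[OF assms] by blast
  then have "(g \<longlongrightarrow> g 1) (at_left 1)"
    by (simp add: isCont_def filterlim_at_split)
  moreover have "filterlim (\<lambda>x. (1 - x) / \<bar>1 - x\<bar>^3 / real n) at_top (at_left 1)"
    using assms by real_asymp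
  ultimately show ?thesis
    unfolding k by (rule filterlim_tendsto_add_at_top)
qed

lemma filterlim_k_at_right_1:
  assumes "n \<ge> 1"
  shows "filterlim (k n) at_bot (at_right 1)"
proof -
  obtain g where "isCont g 1" and k: "\<And>x. k n x = g x + (1 - x) / \<bar>1 - x\<bar>^3 / real n"
    using k_pole_decomposition[OF assms] by blast
  then have "(g \<longlongrightarrow> g 1) (at_right 1)"
    by (simp add: isCont_def filterlim_at_split)
  moreover have "filterlim (\<lambda>x. (1 - x) / \<bar>1 - x\<bar>^3 / real n) at_bot (at_right 1)"
    using assms by real_asymp
  ultimately show ?thesis
    unfolding k by (simp add: filterlim_tendsto_add_at_bot_iff)
qed

lemma isCont_ring_attraction_0: "isCont (ring_attraction n) 0"
  unfolding ring_attraction_def by (intro continuous_intros) auto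

lemma tendsto_H0_at_top: "(H0 n \<longlongrightarrow> 0) at_top"
proof -
  have "((\<lambda>x::real. 1/x) \<longlongrightarrow> 0) at_top"
    by real_asymp
  then have "((\<lambda>x. - ((1/x)^2 * ring_attraction n (1/x))) \<longlongrightarrow> - (0^2 * ring_attraction n 0)) at_top"
    by (intro tendsto_intros isCont_tendsto_compose[OF isCont_ring_attraction_0])
  moreover have "eventually (\<lambda>x. - ((1/x)^2 * ring_attraction n (1/x)) = H0 n x) at_top"
    using eventually_gt_at_top[of 1] by eventually_elim (simp add: H0_inversion)
  ultimately show ?thesis
    by (simp add: tendsto_cong)
qed

lemma tendsto_k_at_top: "(k n \<longlongrightarrow> -1) at_top"
proof -
  have "((\<lambda>x. H0 n x / real n - 1) \<longlongrightarrow> 0 - 1) at_top"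
    by (intro tendsto_diff tendsto_divide_zero tendsto_H0_at_top tendsto_const)
  then show ?thesis
    by (simp add: k_def[abs_def])
qed

theorem lemma1:
  fixes n :: nat
  assumes "n \<ge> 1"
  shows "strict_mono_on {0..<1} (k n)
       \<and> strict_mono_on {1<..} (k n)
       \<and> k n 0 = 0
       \<and> filterlim (k n) at_top (at_left 1)
       \<and> filterlim (k n) at_bot (at_right 1)
       \<and> ((k n) \<longlongrightarrow> -1) at_top"
proof -
  have "k n 0 = 0"
    using assms by (simp add: k_def H0_def)
  then show ?thesis
    using assms by (simp add: k_strict_mono_onI H0_strict_mono_on H0_strict_mono_on_gt1
        filterlim_k_at_left_1 filterlim_k_at_right_1 tendsto_k_at_top)
qed

end
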